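(* Let $G_s$ be a causal DAG over observed variables $V$ (with treatment $X\in V$ and outcome $Y\in V$), augmented with a binary selection node $S$, and let $T(G_s)$ be its twin network (defined in the context) with the counterfactual treatment node $X^*$ intervened on. If $S \perp\!\!\!\perp Y^*_{X^*}$, i.e. $S$ and $Y^*_{X^*}$ are d-separated given the empty set in $T(G_s)$, then the experimental distribution $P(Y^*_{X^*})$ is naturally experimental s-recoverable in $G_s$.
   Context: Selection-augmented graph: $G_s$ is a causal DAG over observed variables $V$ together with an additional binary node $S$ ($S=1$ means the unit is included in the sample, $S=0$ excluded), with directed edges into $S$ from the variables that influence sample inclusion. $G_s$ is read as a structural causal model in which each endogenous node $V_i$ (including $S$) has its own exogenous variable $U_{V_i}$. Twin network $T(G_s)$: take $G_s$ with its exogenous variables, add a counterfactual copy $V_i^*$ of each endogenous node $V_i$ (including a copy $S^*$ of $S$) with the same edges among the copies as among the originals, and let each copy $V_i^*$ share the exogenous parent $U_{V_i}$ of $V_i$; then remove all edges entering the counterfactual treatment node $X^*$ (intervention $do(X^*=x)$). $Y^*_{X^*}$ denotes the counterfactual outcome node in this network, and $P(Y^*_{X^*=x}=y)=P(Y=y\mid do(X=x))$ is the experimental (interventional) distribution. Independence statements between $S$ and $Y^*_{X^*}$ are understood as d-separation statements in $T(G_s)$. Natural experimental s-recoverability: $P(Y^*_{X^*})$ is naturally (experimental) s-recoverable in $G_s$ if for every experimental distribution compatible with $G_s$, $P(Y^*_{X^*}\mid S=1)=P(Y^*_{X^*})>0$. *)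

theory Defs
  imports "HOL-Probability.Probability"
begin

text \<open>A directed graph is given by its edge relation E; (a,b) \<in> E means a \<rightarrow> b.\<close>

definition graph_path :: "('a \<times> 'a) set \<Rightarrow> 'a list \<Rightarrow> bool" where
  "graph_path E p \<longleftrightarrow> p \<noteq> [] \<and> distinct p \<and>
     (\<forall>i. Suc i < length p \<longrightarrow> (p ! i, p ! Suc i) \<in> E \<or> (p ! Suc i, p ! i) \<in> E)"

definition collider_at :: "('a \<times> 'a) set \<Rightarrow> 'a list \<Rightarrow> nat \<Rightarrow> bool" where
  "collider_at E p i \<longleftrightarrow> (p ! (i - 1), p ! i) \<in> E \<and> (p ! Suc i, p ! i) \<in> E"

definition descendants :: "('a \<times> 'a) set \<Rightarrow> 'a \<Rightarrow> 'a set" where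
  "descendants E v = {w. (v, w) \<in> E\<^sup>*}"

definition path_blocked :: "('a \<times> 'a) set \<Rightarrow> 'a set \<Rightarrow> 'a list \<Rightarrow> bool" where
  "path_blocked E Z p \<longleftrightarrow> (\<exists>i. 0 < i \<and> Suc i < length p \<and>
      ((collider_at E p i \<and> descendants E (p ! i) \<inter> Z = {}) \<or>
       (\<not> collider_at E p i \<and> p ! i \<in> Z)))"

definition d_separated :: "('a \<times> 'a) set \<Rightarrow> 'a set \<Rightarrow> 'a set \<Rightarrow> 'a set \<Rightarrow> bool" where
  "d_separated E A B Z \<longleftrightarrow>
     (\<forall>p. graph_path E p \<and> hd p \<in> A \<and> last p \<in> B \<longrightarrow> path_blocked E Z p)"

text \<open>Nodes of the twin network: factual copy, counterfactual copy, and the (shared)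
  exogenous parent of each endogenous node.\<close>
datatype 'n tnode = Fac 'n | Cf 'n | Ex 'n

definition twin_edges :: "'n set \<Rightarrow> ('n \<times> 'n) set \<Rightarrow> 'n \<Rightarrow> ('n tnode \<times> 'n tnode) set" where
  "twin_edges N E X =
      {(Fac j, Fac i) | j i. (j, i) \<in> E}
    \<union> {(Cf j, Cf i) | j i. (j, i) \<in> E \<and> i \<noteq> X}
    \<union> {(Ex i, Fac i) | i. i \<in> N}
    \<union> {(Ex i, Cf i) | i. i \<in> N \<and> i \<noteq> X}"

text \<open>f i v u: structural function of endogenous node i, applied to the values v of the
  endogenous variables and the value u of its own exogenous variable U_i.\<close>

definition scm_compatible ::
  "'n set \<Rightarrow> ('n \<times> 'n) set \<Rightarrow> 'n \<Rightarrow> ('n \<Rightarrow> ('n \<Rightarrow> 'val::zero_neq_one) \<Rightarrow> 'u \<Rightarrow> 'val) \<Rightarrow> bool" where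
  "scm_compatible N E S f \<longleftrightarrow>
     (\<forall>i\<in>N. \<forall>v v' u. (\<forall>j. (j, i) \<in> E \<longrightarrow> v j = v' j) \<longrightarrow> f i v u = f i v' u) \<and>
     (\<forall>v u. f S v u \<in> {0, 1})"

text \<open>The (unique, by acyclicity) solution of the structural equations for exogenous
  values u, under the intervention given by the partial map dom_int (nodes with dom_int i = Some x
  are set to x).\<close>
definition scm_solve ::
  "'n set \<Rightarrow> ('n \<Rightarrow> ('n \<Rightarrow> 'val) \<Rightarrow> 'u \<Rightarrow> 'val) \<Rightarrow> ('n \<Rightarrow> 'val option) \<Rightarrow> ('n \<Rightarrow> 'u) \<Rightarrow> ('n \<Rightarrow> 'val)" where
  "scm_solve N f dom_int u = (THE v. (\<forall>i. i \<notin> N \<longrightarrow> v i = undefined) \<and>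
      (\<forall>i\<in>N. v i = (case dom_int i of Some x \<Rightarrow> x | None \<Rightarrow> f i v (u i))))"

text \<open>Joint distribution of the factual world and the counterfactual world under do(X = x),
  sharing the mutually independent exogenous variables (distributions PU).\<close>
definition twin_dist ::
  "'n set \<Rightarrow> ('n \<Rightarrow> ('n \<Rightarrow> 'val) \<Rightarrow> 'u \<Rightarrow> 'val) \<Rightarrow> ('n \<Rightarrow> 'u pmf) \<Rightarrow> 'n \<Rightarrow> 'val
     \<Rightarrow> (('n \<Rightarrow> 'val) \<times> ('n \<Rightarrow> 'val)) pmf" where
  "twin_dist N f PU X x = map_pmf (\<lambda>u. (scm_solve N f Map.empty u, scm_solve N f [X \<mapsto> x] u))
       (Pi_pmf N undefined PU)"

end

theory Submission
  imports Defs "HOL-Library.Transitive_Closure_Table"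
begin

text \<open>
  In the factual world the selection indicator S is a function of the exogenous variables
  U_j of the ancestors j of S; in the counterfactual world under do(X = x) the outcome Y is a
  function of the U_j for those j \<noteq> X that reach Y along a directed path avoiding X.
  If some j lay in both sets, the path Fac S \<leftarrow> ... \<leftarrow> Fac j \<leftarrow> Ex j \<rightarrow> Cf j \<rightarrow> ... \<rightarrow> Cf Y
  of the twin network would contain no collider and hence would d-connect Fac S with Cf Y.
  So the two events depend on disjoint blocks of the independent exogenous variables and are
  therefore independent, which makes conditioning on S = 1 harmless.
\<close>

definition depends_on_parents ::
  "'n set \<Rightarrow> ('n \<times> 'n) set \<Rightarrow> ('n \<Rightarrow> ('n \<Rightarrow> 'val) \<Rightarrow> 'u \<Rightarrow> 'val) \<Rightarrow> bool" where
  "depends_on_parents N E f \<longleftrightarrow>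
     (\<forall>i\<in>N. \<forall>v v' u. (\<forall>j. (j, i) \<in> E \<longrightarrow> v j = v' j) \<longrightarrow> f i v u = f i v' u)"

definition is_scm_solution ::
  "'n set \<Rightarrow> ('n \<Rightarrow> ('n \<Rightarrow> 'val) \<Rightarrow> 'u \<Rightarrow> 'val) \<Rightarrow> ('n \<Rightarrow> 'val option) \<Rightarrow> ('n \<Rightarrow> 'u)
     \<Rightarrow> ('n \<Rightarrow> 'val) \<Rightarrow> bool" where
  "is_scm_solution N f d u v \<longleftrightarrow> (\<forall>i. i \<notin> N \<longrightarrow> v i = undefined) \<and>
     (\<forall>i\<in>N. v i = (case d i of Some x \<Rightarrow> x | None \<Rightarrow> f i v (u i)))"

lemma depends_on_parentsD:
  "depends_on_parents N E f \<Longrightarrow> i \<in> N \<Longrightarrow> (\<And>j. (j, i) \<in> E \<Longrightarrow> v j = v' j) \<Longrightarrow>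
   f i v u = f i v' u"
  unfolding depends_on_parents_def by blast

lemma scm_compatible_depends_on_parents:
  "scm_compatible N E S f \<Longrightarrow> depends_on_parents N E f"
  by (simp add: scm_compatible_def depends_on_parents_def)

lemma is_scm_solution_agree:
  assumes "wf E" and f: "depends_on_parents N E f"
    and v: "is_scm_solution N f d u v" and v': "is_scm_solution N f d u' v'"
    and "\<And>j. j \<in> N \<Longrightarrow> d j = None \<Longrightarrow> (j, i) \<in> {(a, b) \<in> E. d b = None}\<^sup>* \<Longrightarrow> u j = u' j"
  shows "v i = v' i"
  using assms(1,5)
proof (induction i rule: wf_induct_rule)
  case (less i)
  show ?case
  proof (cases "i \<in> N \<and> d i = None")
    case False
    then consider "i \<notin> N" | y where "i \<in> N" "d i = Some y" by auto
    then show ?thesis using v v' by cases (simp_all add: is_scm_solution_def)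
  next
    case True
    have parents: "v j = v' j" if "(j, i) \<in> E" for j
    proof (rule less.IH[OF that])
      fix k assume "k \<in> N" "d k = None" "(k, j) \<in> {(a, b) \<in> E. d b = None}\<^sup>*"
      moreover have "(j, i) \<in> {(a, b) \<in> E. d b = None}" using that True by simp
      ultimately show "u k = u' k" using less.prems by (meson rtrancl_into_rtrancl)
    qed
    have "f i v (u i) = f i v' (u i)"
      by (rule depends_on_parentsD[OF f]) (use True parents in auto)
    moreover have "u i = u' i" using True less.prems by blast
    ultimately show ?thesis using v v' True by (simp add: is_scm_solution_def)
  qed
qed

lemma is_scm_solution_exists:
  assumes "wf E" and f: "depends_on_parents N E f"
  shows "\<exists>v. is_scm_solution N f d u v"
proof
  define step where "step = (\<lambda>v i. if i \<in> N then (case d i of Some x \<Rightarrow> x | None \<Rightarrow> f i v (u i))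
                                   else undefined)"
  let ?v = "wfrec E step"
  have unfold: "?v i = step (cut ?v E i) i" for i by (rule wfrec[OF assms(1)])
  show "is_scm_solution N f d u ?v"
    unfolding is_scm_solution_def
  proof (intro conjI allI impI ballI)
    fix i assume "i \<notin> N"
    then show "?v i = undefined" using unfold[of i] by (simp add: step_def)
  next
    fix i assume "i \<in> N"
    moreover have "f i (cut ?v E i) (u i) = f i ?v (u i)"
      by (rule depends_on_parentsD[OF f \<open>i \<in> N\<close>]) (simp add: cut_def)
    ultimately show "?v i = (case d i of Some x \<Rightarrow> x | None \<Rightarrow> f i ?v (u i))"
      using unfold[of i] by (simp add: step_def split: option.split)
  qed
qed

lemma is_scm_solution_scm_solve:
  assumes "wf E" and "depends_on_parents N E f"
  shows "is_scm_solution N f d u (scm_solve N f d u)"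
proof -
  have "\<exists>!v. is_scm_solution N f d u v"
  proof (rule ex_ex1I)
    show "\<exists>v. is_scm_solution N f d u v" using assms by (rule is_scm_solution_exists)
  next
    fix v v' assume "is_scm_solution N f d u v" "is_scm_solution N f d u v'"
    then show "v = v'" by (intro ext is_scm_solution_agree[OF assms]) simp_all
  qed
  then show ?thesis
    unfolding scm_solve_def is_scm_solution_def[symmetric] by (rule theI')
qed

lemma scm_solve_agree:
  assumes "wf E" and "depends_on_parents N E f"
    and "\<And>j. j \<in> N \<Longrightarrow> d j = None \<Longrightarrow> (j, i) \<in> {(a, b) \<in> E. d b = None}\<^sup>* \<Longrightarrow> u j = u' j"
  shows "scm_solve N f d u i = scm_solve N f d u' i"
  using is_scm_solution_agree[OF assms(1,2) is_scm_solution_scm_solve[OF assms(1,2)]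
      is_scm_solution_scm_solve[OF assms(1,2)] assms(3)] .

lemma scm_solve_no_intervention_agree:
  assumes "wf E" and "depends_on_parents N E f"
    and "\<And>j. j \<in> N \<Longrightarrow> (j, i) \<in> E\<^sup>* \<Longrightarrow> u j = u' j"
  shows "scm_solve N f Map.empty u i = scm_solve N f Map.empty u' i"
  using assms by (intro scm_solve_agree) simp_all

lemma scm_solve_single_intervention_agree:
  assumes "wf E" and "depends_on_parents N E f"
    and "\<And>j. j \<in> N \<Longrightarrow> j \<noteq> X \<Longrightarrow> (j, i) \<in> {(a, b) \<in> E. b \<noteq> X}\<^sup>* \<Longrightarrow> u j = u' j"
  shows "scm_solve N f [X \<mapsto> x] u i = scm_solve N f [X \<mapsto> x] u' i"
proof (rule scm_solve_agree[OF assms(1,2)])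
  have "{(a, b) \<in> E. [X \<mapsto> x] b = None} = {(a, b) \<in> E. b \<noteq> X}" by auto
  then show "u j = u' j"
    if "j \<in> N" "[X \<mapsto> x] j = None" "(j, i) \<in> {(a, b) \<in> E. [X \<mapsto> x] b = None}\<^sup>*" for j
    using that assms(3) by (auto split: if_splits)
qed

lemma rtrancl_imp_distinct_chain:
  assumes "(a, b) \<in> R\<^sup>*"
  obtains p where "distinct p" "hd p = a" "last p = b" "p \<noteq> []"
    "successively (\<lambda>x y. (x, y) \<in> R) p"
proof -
  have "rtranclp (\<lambda>x y. (x, y) \<in> R) a b" using assms by (simp add: rtrancl_def)
  then obtain xs where "rtrancl_path (\<lambda>x y. (x, y) \<in> R) a xs b"
    by (auto simp: rtranclp_eq_rtrancl_path)
  then obtain ys where ys: "rtrancl_path (\<lambda>x y. (x, y) \<in> R) a ys b" "distinct (a # ys)"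
    by (rule rtrancl_path_distinct)
  have "successively (\<lambda>x y. (x, y) \<in> R) (x # zs) \<and> last (x # zs) = z"
    if "rtrancl_path (\<lambda>x y. (x, y) \<in> R) x zs z" for x zs z
    using that by induction (auto simp: successively_Cons)
  with ys show thesis by (intro that[of "a # ys"]) auto
qed

lemma trek_graph_path:
  assumes "distinct (xs @ s # ys)"
    and "successively (\<lambda>a b. (b, a) \<in> E) (xs @ [s])"
    and "successively (\<lambda>a b. (a, b) \<in> E) (s # ys)"
  shows "graph_path E (xs @ s # ys)"
proof -
  have "successively (\<lambda>a b. (a, b) \<in> E \<or> (b, a) \<in> E) ((xs @ [s]) @ ys)"
    using assms(2,3) unfolding successively_append_iff
    by (auto elim: successively_mono simp: successively_Cons)
  with assms(1) show ?thesis by (simp add: graph_path_def successively_conv_nth)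
qed

lemma trek_unblocked:
  assumes asym: "\<And>a b. (a, b) \<in> E \<Longrightarrow> (b, a) \<notin> E"
    and towards_s: "successively (\<lambda>a b. (b, a) \<in> E) (xs @ [s])"
    and from_s: "successively (\<lambda>a b. (a, b) \<in> E) (s # ys)"
  shows "\<not> path_blocked E {} (xs @ s # ys)"
proof
  let ?p = "xs @ s # ys"
  assume "path_blocked E {} ?p"
  then obtain i where i: "0 < i" "Suc i < length ?p" and col: "collider_at E ?p i"
    by (auto simp: path_blocked_def)
  show False
  proof (cases "i \<le> length xs")
    case True
    then have "?p ! (i - 1) = (xs @ [s]) ! (i - 1)" "?p ! i = (xs @ [s]) ! Suc (i - 1)"
      using i(1) by (simp_all add: nth_append)
    then have "(?p ! i, ?p ! (i - 1)) \<in> E"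
      using successively_nth[OF towards_s, of "i - 1"] True i(1) by simp
    then show False using col asym by (auto simp: collider_at_def)
  next
    case False
    then have "?p ! i = (s # ys) ! (i - length xs)" "?p ! Suc i = (s # ys) ! Suc (i - length xs)"
      by (simp_all add: nth_append Suc_diff_le)
    then have "(?p ! i, ?p ! Suc i) \<in> E"
      using successively_nth[OF from_s, of "i - length xs"] False i(2) by simp
    then show False using col asym by (auto simp: collider_at_def)
  qed
qed

lemma twin_edges_asym:
  assumes "acyclic E" and "(a, b) \<in> twin_edges N E X"
  shows "(b, a) \<notin> twin_edges N E X"
proof
  assume "(b, a) \<in> twin_edges N E X"
  with assms(2) obtain i j where "(i, j) \<in> E" "(j, i) \<in> E"
    unfolding twin_edges_def by auto
  then have "(i, i) \<in> E\<^sup>+" by (meson trancl.r_into_trancl trancl_into_trancl)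
  with assms(1) show False by (simp add: acyclic_def)
qed

lemma twin_common_exogenous_ancestor_d_connected:
  assumes "acyclic E" and "j \<in> N" and "j \<noteq> X"
    and "(j, S) \<in> E\<^sup>*" and "(j, Y) \<in> {(a, b) \<in> E. b \<noteq> X}\<^sup>*"
  shows "\<not> d_separated (twin_edges N E X) {Fac S} {Cf Y} {}"
proof -
  let ?T = "twin_edges N E X"
  obtain ps where ps: "distinct ps" "hd ps = j" "last ps = S" "ps \<noteq> []"
    "successively (\<lambda>a b. (a, b) \<in> E) ps"
    using assms(4) by (rule rtrancl_imp_distinct_chain)
  obtain qs where qs: "distinct qs" "hd qs = j" "last qs = Y" "qs \<noteq> []"
    "successively (\<lambda>a b. (a, b) \<in> {(a, b) \<in> E. b \<noteq> X}) qs"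
    using assms(5) by (rule rtrancl_imp_distinct_chain)
  let ?xs = "map Fac (rev ps)" and ?ys = "map Cf qs"
  have towards_Ex: "successively (\<lambda>a b. (b, a) \<in> ?T) (?xs @ [Ex j])"
    using ps assms(2) by (auto simp: successively_append_iff successively_map last_map last_rev
        twin_edges_def elim!: successively_mono)
  have from_Ex: "successively (\<lambda>a b. (a, b) \<in> ?T) (Ex j # ?ys)"
    using qs assms(2,3) by (auto simp: successively_Cons successively_map hd_map
        twin_edges_def elim!: successively_mono)
  have "graph_path ?T (?xs @ Ex j # ?ys)"
    using ps(1) qs(1) towards_Ex from_Ex
    by (intro trek_graph_path) (auto simp: distinct_map inj_on_def)
  moreover have "\<not> path_blocked ?T {} (?xs @ Ex j # ?ys)"
    by (rule trek_unblocked[OF twin_edges_asym[OF assms(1)] towards_Ex from_Ex])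
  moreover have "hd (?xs @ Ex j # ?ys) = Fac S" "last (?xs @ Ex j # ?ys) = Cf Y"
    using ps(3,4) qs(3,4) by (simp_all add: hd_map hd_rev last_map)
  ultimately show ?thesis by (auto simp: d_separated_def)
qed

lemma measure_pmf_prob_pair_Times:
  "measure_pmf.prob (pair_pmf M1 M2) (A \<times> B) = measure_pmf.prob M1 A * measure_pmf.prob M2 B"
proof -
  have "measure_pmf.prob (pair_pmf M1 M2) (A \<times> B)
      = measure_pmf.prob (pair_pmf M1 M2) ((A \<inter> set_pmf M1) \<times> (B \<inter> set_pmf M2))"
    by (subst measure_Int_set_pmf[symmetric]) (simp add: Times_Int_Times Int_ac)
  also have "\<dots> = measure_pmf.prob M1 (A \<inter> set_pmf M1) * measure_pmf.prob M2 (B \<inter> set_pmf M2)"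
    by (rule measure_pmf_prob_product) auto
  finally show ?thesis by (simp add: measure_Int_set_pmf)
qed

lemma Pi_pmf_prob_independent:
  fixes p :: "'i \<Rightarrow> 'x pmf"
  assumes "finite N" and "A \<subseteq> N"
    and P: "\<And>u u'. (\<And>j. j \<in> A \<Longrightarrow> u j = u' j) \<Longrightarrow> P u = P u'"
    and Q: "\<And>u u'. (\<And>j. j \<in> N - A \<Longrightarrow> u j = u' j) \<Longrightarrow> Q u = Q u'"
  shows "measure_pmf.prob (Pi_pmf N dflt p) {u. P u \<and> Q u}
       = measure_pmf.prob (Pi_pmf N dflt p) {u. P u} * measure_pmf.prob (Pi_pmf N dflt p) {u. Q u}"
proof -
  define glue :: "('i \<Rightarrow> 'x) \<times> ('i \<Rightarrow> 'x) \<Rightarrow> 'i \<Rightarrow> 'x"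
    where "glue = (\<lambda>(g, h) i. if i \<in> A then g i else h i)"
  let ?pair = "pair_pmf (Pi_pmf A dflt p) (Pi_pmf (N - A) dflt p)"
  have "Pi_pmf (A \<union> (N - A)) dflt p = map_pmf glue ?pair"
    unfolding glue_def using assms(1,2) by (intro Pi_pmf_union) (auto intro: finite_subset)
  moreover have "A \<union> (N - A) = N" using assms(2) by auto
  ultimately have split: "Pi_pmf N dflt p = map_pmf glue ?pair" by simp
  define c where "c = (\<lambda>_ :: 'i. dflt)"
  have P_glue: "P (glue (g, h)) = P (glue (g, c))" for g h by (rule P) (simp add: glue_def)
  have Q_glue: "Q (glue (g, h)) = Q (glue (c, h))" for g h by (rule Q) (simp add: glue_def)
  have preimages: "glue -` {u. P u \<and> Q u} = {g. P (glue (g, c))} \<times> {h. Q (glue (c, h))}"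
    "glue -` {u. P u} = {g. P (glue (g, c))} \<times> UNIV"
    "glue -` {u. Q u} = UNIV \<times> {h. Q (glue (c, h))}"
    using P_glue Q_glue by auto
  show ?thesis
    unfolding split measure_map_pmf preimages measure_pmf_prob_pair_Times by simp
qed

theorem theorem1:
  fixes V :: "'n set" and E :: "('n \<times> 'n) set" and X Y S :: 'n
    and PU :: "'n \<Rightarrow> 'u pmf" and f :: "'n \<Rightarrow> ('n \<Rightarrow> 'val::zero_neq_one) \<Rightarrow> 'u \<Rightarrow> 'val"
  assumes finV: "finite V"
    and S_new: "S \<notin> V" and XV: "X \<in> V" and YV: "Y \<in> V"
    and E_nodes: "E \<subseteq> insert S V \<times> insert S V"
    and dag: "acyclic E"
    and S_sink: "\<forall>j. (S, j) \<notin> E"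
    and dsep: "d_separated (twin_edges (insert S V) E X) {Fac S} {Cf Y} {}"
    and compat: "scm_compatible (insert S V) E S f"
    and sel_pos: "measure_pmf.prob (twin_dist (insert S V) f PU X x) {w. fst w S = 1} > 0"
  shows "measure_pmf.prob (twin_dist (insert S V) f PU X x) {w. fst w S = 1 \<and> snd w Y = y}
           / measure_pmf.prob (twin_dist (insert S V) f PU X x) {w. fst w S = 1}
         = measure_pmf.prob (twin_dist (insert S V) f PU X x) {w. snd w Y = y}"
proof -
  let ?N = "insert S V"
  have "finite E" using E_nodes by (rule finite_subset) (simp add: finV)
  then have wf: "wf E" using dag by (rule finite_acyclic_wf)
  have f: "depends_on_parents ?N E f" using compat by (rule scm_compatible_depends_on_parents)
  define A where "A = {j \<in> ?N. (j, S) \<in> E\<^sup>*}"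
  have "measure_pmf.prob (Pi_pmf ?N undefined PU)
          {u. scm_solve ?N f Map.empty u S = 1 \<and> scm_solve ?N f [X \<mapsto> x] u Y = y}
      = measure_pmf.prob (Pi_pmf ?N undefined PU) {u. scm_solve ?N f Map.empty u S = 1}
      * measure_pmf.prob (Pi_pmf ?N undefined PU) {u. scm_solve ?N f [X \<mapsto> x] u Y = y}"
  proof (rule Pi_pmf_prob_independent)
    show "finite ?N" "A \<subseteq> ?N" using finV by (auto simp: A_def)
  next
    fix u u' :: "'n \<Rightarrow> 'u" assume "\<And>j. j \<in> A \<Longrightarrow> u j = u' j"
    then have "scm_solve ?N f Map.empty u S = scm_solve ?N f Map.empty u' S"
      by (intro scm_solve_no_intervention_agree[OF wf f]) (simp add: A_def)
    then show "(scm_solve ?N f Map.empty u S = 1) = (scm_solve ?N f Map.empty u' S = 1)" by simp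
  next
    fix u u' :: "'n \<Rightarrow> 'u" assume agree: "\<And>j. j \<in> ?N - A \<Longrightarrow> u j = u' j"
    have "u j = u' j" if "j \<in> ?N" "j \<noteq> X" "(j, Y) \<in> {(a, b) \<in> E. b \<noteq> X}\<^sup>*" for j
    proof (rule agree)
      have "(j, S) \<notin> E\<^sup>*"
        using twin_common_exogenous_ancestor_d_connected[OF dag that(1,2) _ that(3)] dsep by blast
      with that(1) show "j \<in> ?N - A" by (auto simp: A_def)
    qed
    then have "scm_solve ?N f [X \<mapsto> x] u Y = scm_solve ?N f [X \<mapsto> x] u' Y"
      by (rule scm_solve_single_intervention_agree[OF wf f])
    then show "(scm_solve ?N f [X \<mapsto> x] u Y = y) = (scm_solve ?N f [X \<mapsto> x] u' Y = y)" by simp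
  qed
  with sel_pos show ?thesis by (simp add: twin_dist_def vimage_def)
qed

end
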